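(* Let $a,b\ge1$ and $P=[a]\times[b]$. For $1\le i\le a$, with $B=\{i\}\times[b]$, we have $\sum_{p\in B}T_p^-\equiv^q q^{a-i}\frac{[b]_q}{[a+b]_q}$. For $1\le j\le b$, with $B=[a]\times\{j\}$, we have $\sum_{p\in B}T_p^-\equiv^q q^{b-j}\frac{[a]_q}{[a+b]_q}$.
   Context: $[a]\times[b]=\{(i,j)\colon1\le i\le a,1\le j\le b\}$ with $(i,j)\le(i',j')$ iff $i\le i'$ and $j\le j'$. $\mathcal{J}(P)$ is the set of order ideals. For $p\in P$, $I\in\mathcal{J}(P)$: $T_p^+(I)=1$ if $p$ is minimal in $P\setminus I$, else $0$; $T_p^-(I)=1$ if $p$ is maximal in $I$, else $0$; $T_p^q=T_p^+-qT_p^-$ with $q$ an indeterminate. For $f,g\colon\mathcal{J}(P)\to\mathbb{R}(q)$, $f\equiv^q g$ means $f-g=\sum_{p\in P}c_p(q)T_p^q$ for some $c_p(q)\in\mathbb{R}(q)$; an element of $\mathbb{R}(q)$ denotes a constant function. $[m]_q=1+q+\dots+q^{m-1}$. *)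

theory Defs
  imports "HOL-Computational_Algebra.Polynomial" "HOL-Computational_Algebra.Fraction_Field"
begin

type_synonym ratfun = "real poly fract"

definition qvar :: ratfun where
  "qvar = Fract [:0, 1:] 1"

definition qint :: "nat \<Rightarrow> ratfun" where
  "qint m = (\<Sum>k<m. qvar ^ k)"

definition grid :: "nat \<Rightarrow> nat \<Rightarrow> (nat \<times> nat) set" where
  "grid a b = {(i, j). 1 \<le> i \<and> i \<le> a \<and> 1 \<le> j \<and> j \<le> b}"

definition gle :: "nat \<times> nat \<Rightarrow> nat \<times> nat \<Rightarrow> bool" where
  "gle x y \<longleftrightarrow> fst x \<le> fst y \<and> snd x \<le> snd y"

definition order_ideals :: "('a \<Rightarrow> 'a \<Rightarrow> bool) \<Rightarrow> 'a set \<Rightarrow> 'a set set" where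
  "order_ideals le P = {I. I \<subseteq> P \<and> (\<forall>x\<in>I. \<forall>y\<in>P. le y x \<longrightarrow> y \<in> I)}"

definition Tplus :: "('a \<Rightarrow> 'a \<Rightarrow> bool) \<Rightarrow> 'a set \<Rightarrow> 'a \<Rightarrow> 'a set \<Rightarrow> ratfun" where
  "Tplus le P p I = (if p \<in> P - I \<and> (\<forall>r\<in>P - I. le r p \<longrightarrow> r = p) then 1 else 0)"

definition Tminus :: "('a \<Rightarrow> 'a \<Rightarrow> bool) \<Rightarrow> 'a set \<Rightarrow> 'a \<Rightarrow> 'a set \<Rightarrow> ratfun" where
  "Tminus le P p I = (if p \<in> I \<and> (\<forall>r\<in>I. le p r \<longrightarrow> r = p) then 1 else 0)"

definition Tq :: "('a \<Rightarrow> 'a \<Rightarrow> bool) \<Rightarrow> 'a set \<Rightarrow> 'a \<Rightarrow> 'a set \<Rightarrow> ratfun" where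
  "Tq le P p I = Tplus le P p I - qvar * Tminus le P p I"

definition qequiv :: "('a \<Rightarrow> 'a \<Rightarrow> bool) \<Rightarrow> 'a set \<Rightarrow> ('a set \<Rightarrow> ratfun) \<Rightarrow> ('a set \<Rightarrow> ratfun) \<Rightarrow> bool" where
  "qequiv le P f g \<longleftrightarrow> (\<exists>c :: 'a \<Rightarrow> ratfun. \<forall>I\<in>order_ideals le P.
      f I - g I = (\<Sum>p\<in>P. c p * Tq le P p I))"

end

theory Submission
  imports Defs
begin

text \<open>
  An ideal I of [a] x [b] is a partition with row lengths b >= l(1) >= ... >= l(a) >= 0.
  Row k contains a maximal element of I iff l(k+1) < l(k), and a minimal element of the
  complement iff l(k) < l(k-1), where l(0) = b.  Writing c(k) for the indicator of
  l(k+1) < l(k), the sum of the toggles T_p^q over row k therefore says c(k-1) \<equiv> q c(k),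
  hence c(i) \<equiv> q^(a-i) c(a).  The two ends are boundary conditions: c(0) = [(1,b) \<notin> I] and
  c(a) = [(a,1) \<in> I] are the complements of the opposite end indicators for the columns.
  With the same telescoping along the columns this gives 1 - y \<equiv> q^a x and 1 - x \<equiv> q^b y,
  where x = c(a) and y is its column analogue, whence
  x \<equiv> (1 - q^b) / (1 - q^(a+b)) = [b]_q / [a+b]_q.  The column statements follow by transposition.
\<close>

lemma qequiv_diff_cong:
  assumes "qequiv le P f g"
    and "\<And>I. I \<in> order_ideals le P \<Longrightarrow> f' I - g' I = f I - g I"
  shows "qequiv le P f' g'"
  using assms by (simp add: qequiv_def)

lemma qequiv_refl: "qequiv le P f f"
  unfolding qequiv_def by (intro exI[of _ "\<lambda>_. 0"]) simp

lemma qequiv_lincomb: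
  assumes "qequiv le P f g" and "qequiv le P f' g'"
  shows "qequiv le P (\<lambda>I. x * f I + y * f' I) (\<lambda>I. x * g I + y * g' I)"
proof -
  obtain c c' where
    c: "\<forall>I\<in>order_ideals le P. f I - g I = (\<Sum>p\<in>P. c p * Tq le P p I)" and
    c': "\<forall>I\<in>order_ideals le P. f' I - g' I = (\<Sum>p\<in>P. c' p * Tq le P p I)"
    using assms unfolding qequiv_def by blast
  show ?thesis
    unfolding qequiv_def
  proof (intro exI[of _ "\<lambda>p. x * c p + y * c' p"] ballI)
    fix I assume "I \<in> order_ideals le P"
    then have "x * f I + y * f' I - (x * g I + y * g' I) = x * (f I - g I) + y * (f' I - g' I)"
      by (simp add: algebra_simps)
    with c c' \<open>I \<in> order_ideals le P\<close>
    show "x * f I + y * f' I - (x * g I + y * g' I) = (\<Sum>p\<in>P. (x * c p + y * c' p) * Tq le P p I)"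
      by (simp add: algebra_simps sum.distrib sum_distrib_left)
  qed
qed

lemma qequiv_scale:
  assumes "qequiv le P f g"
  shows "qequiv le P (\<lambda>I. x * f I) (\<lambda>I. x * g I)"
  using qequiv_lincomb[OF assms qequiv_refl, of x 0] by simp

lemma qequiv_trans [trans]:
  assumes "qequiv le P f g" and "qequiv le P g h"
  shows "qequiv le P f h"
  using qequiv_lincomb[OF assms, of 1 1] by (rule qequiv_diff_cong) simp

lemma qequiv_toggle_sum:
  assumes "finite P" and "S \<subseteq> P"
  shows "qequiv le P (\<lambda>I. \<Sum>p\<in>S. Tplus le P p I) (\<lambda>I. qvar * (\<Sum>p\<in>S. Tminus le P p I))"
  unfolding qequiv_def
proof (intro exI[of _ "\<lambda>p. if p \<in> S then 1 else 0"] ballI)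
  fix I
  have "(\<Sum>p\<in>P. (if p \<in> S then 1 else 0) * Tq le P p I) = (\<Sum>p\<in>P. if p \<in> S then Tq le P p I else 0)"
    by (rule sum.cong) simp_all
  also have "\<dots> = (\<Sum>p\<in>S. Tq le P p I)"
    using assms by (simp add: sum.inter_restrict[symmetric] Int_absorb1)
  finally show "(\<Sum>p\<in>S. Tplus le P p I) - qvar * (\<Sum>p\<in>S. Tminus le P p I) =
      (\<Sum>p\<in>P. (if p \<in> S then 1 else 0) * Tq le P p I)"
    by (simp add: Tq_def sum_subtractf sum_distrib_left)
qed

lemma qequiv_solve:
  assumes xy: "qequiv le P (\<lambda>I. 1 - y I) (\<lambda>I. u * x I)"
    and yx: "qequiv le P (\<lambda>I. 1 - x I) (\<lambda>I. v * y I)"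
    and uv: "u * v \<noteq> 1"
  shows "qequiv le P x (\<lambda>_. (1 - v) / (1 - u * v))"
  using qequiv_lincomb[OF xy yx, of "v / (1 - u * v)" "- 1 / (1 - u * v)"]
proof (rule qequiv_diff_cong)
  fix I
  have "1 - u * v \<noteq> 0" using uv by simp
  then show "x I - (1 - v) / (1 - u * v) =
    v / (1 - u * v) * (1 - y I) + - 1 / (1 - u * v) * (1 - x I) -
    (v / (1 - u * v) * (u * x I) + - 1 / (1 - u * v) * (v * y I))"
    by (simp add: divide_simps) (simp add: algebra_simps)
qed

lemma qvar_power: "qvar ^ n = Fract ([:0, 1:] ^ n) 1"
  by (induction n) (simp_all add: qvar_def One_fract_def)

lemma qvar_power_ne_1:
  assumes "n \<noteq> 0"
  shows "qvar ^ n \<noteq> 1"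
proof
  assume "qvar ^ n = 1"
  then have "[:0, 1:] ^ n = (1 :: real poly)"
    by (simp add: qvar_power One_fract_def eq_fract)
  then have "degree ([:0, 1 :: real:] ^ n) = 0" by simp
  with assms show False by (simp add: degree_power_eq)
qed

lemma qint_ratio:
  assumes "n \<noteq> 0"
  shows "qint m / qint n = (1 - qvar ^ m) / (1 - qvar ^ n)"
proof -
  have "qvar \<noteq> 1" using qvar_power_ne_1[of 1] by simp
  moreover have "1 - qvar ^ n \<noteq> 0" using qvar_power_ne_1[OF assms] by simp
  ultimately show ?thesis by (simp add: qint_def sum_gp_strict)
qed

lemma order_ideals_subset: "I \<in> order_ideals le P \<Longrightarrow> I \<subseteq> P"
  by (simp add: order_ideals_def)

lemma order_ideals_down_closed:
  "I \<in> order_ideals le P \<Longrightarrow> x \<in> I \<Longrightarrow> y \<in> P \<Longrightarrow> le y x \<Longrightarrow> y \<in> I"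
  by (simp add: order_ideals_def)

lemma order_ideals_image:
  assumes "inj h" and "\<And>x y. le' (h x) (h y) \<longleftrightarrow> le x y"
    and "I \<in> order_ideals le P"
  shows "h ` I \<in> order_ideals le' (h ` P)"
  using assms by (auto simp: order_ideals_def)

lemma Tminus_image:
  assumes "inj h" and "\<And>x y. le' (h x) (h y) \<longleftrightarrow> le x y"
  shows "Tminus le' (h ` P) (h p) (h ` I) = Tminus le P p I"
  using assms by (simp add: Tminus_def inj_image_mem_iff inj_eq)

lemma Tplus_image:
  assumes "inj h" and "\<And>x y. le' (h x) (h y) \<longleftrightarrow> le x y"
  shows "Tplus le' (h ` P) (h p) (h ` I) = Tplus le P p I"
proof -
  have "h ` P - h ` I = h ` (P - I)" using \<open>inj h\<close> by (simp add: image_set_diff)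
  then show ?thesis using assms by (simp add: Tplus_def inj_image_mem_iff inj_eq)
qed

lemma qequiv_image:
  assumes "inj h" and "\<And>x y. le' (h x) (h y) \<longleftrightarrow> le x y"
    and "qequiv le' (h ` P) f g"
  shows "qequiv le P (\<lambda>I. f (h ` I)) (\<lambda>I. g (h ` I))"
proof -
  obtain c where c: "\<forall>J\<in>order_ideals le' (h ` P). f J - g J = (\<Sum>p'\<in>h ` P. c p' * Tq le' (h ` P) p' J)"
    using assms(3) unfolding qequiv_def by blast
  show ?thesis
    unfolding qequiv_def
  proof (intro exI[of _ "c \<circ> h"] ballI)
    fix I assume "I \<in> order_ideals le P"
    then have "h ` I \<in> order_ideals le' (h ` P)" using order_ideals_image assms(1,2) by blast
    with c have "f (h ` I) - g (h ` I) = (\<Sum>p'\<in>h ` P. c p' * Tq le' (h ` P) p' (h ` I))" by blast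
    also have "\<dots> = (\<Sum>p\<in>P. (c \<circ> h) p * Tq le P p I)"
      using assms(1,2) by (simp add: sum.reindex inj_on_subset Tq_def Tplus_image Tminus_image)
    finally show "f (h ` I) - g (h ` I) = (\<Sum>p\<in>P. (c \<circ> h) p * Tq le P p I)" .
  qed
qed

lemma gle_swap: "gle (prod.swap x) (prod.swap y) \<longleftrightarrow> gle x y"
  by (auto simp: gle_def)

lemma grid_transpose: "prod.swap ` grid a b = grid b a"
  by (auto simp: grid_def)

lemma transpose_ideal:
  assumes "I \<in> order_ideals gle (grid a b)"
  shows "prod.swap ` I \<in> order_ideals gle (grid b a)"
  using order_ideals_image[where le = gle and le' = gle, OF inj_swap gle_swap assms]
  by (simp only: grid_transpose)

lemma qequiv_transpose:
  assumes "qequiv gle (grid b a) f g"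
  shows "qequiv gle (grid a b) (\<lambda>I. f (prod.swap ` I)) (\<lambda>I. g (prod.swap ` I))"
  using assms unfolding grid_transpose[of a b, symmetric]
  by (rule qequiv_image[where le = gle and le' = gle, OF inj_swap gle_swap])

lemma Tminus_transpose:
  "Tminus gle (grid b a) (prod.swap p) (prod.swap ` I) = Tminus gle (grid a b) p I"
  using Tminus_image[where le = gle and le' = gle and P = "grid a b", OF inj_swap gle_swap]
  by (simp only: grid_transpose)

lemma finite_grid: "finite (grid a b)"
proof -
  have "grid a b = {1..a} \<times> {1..b}" by (auto simp: grid_def)
  then show ?thesis by simp
qed

lemma Tminus_grid:
  assumes I: "I \<in> order_ideals gle (grid a b)"
  shows "Tminus gle (grid a b) (k, j) I =
    (if (k, j) \<in> I \<and> (k, Suc j) \<notin> I \<and> (Suc k, j) \<notin> I then 1 else 0)"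
proof -
  have "(\<forall>r\<in>I. gle (k, j) r \<longrightarrow> r = (k, j)) \<longleftrightarrow> (k, Suc j) \<notin> I \<and> (Suc k, j) \<notin> I"
    if "(k, j) \<in> I"
  proof
    assume "\<forall>r\<in>I. gle (k, j) r \<longrightarrow> r = (k, j)"
    then show "(k, Suc j) \<notin> I \<and> (Suc k, j) \<notin> I" by (auto simp: gle_def)
  next
    assume covers: "(k, Suc j) \<notin> I \<and> (Suc k, j) \<notin> I"
    show "\<forall>r\<in>I. gle (k, j) r \<longrightarrow> r = (k, j)"
    proof (intro ballI impI)
      fix r assume "r \<in> I" "gle (k, j) r"
      have "r \<in> grid a b" "(k, j) \<in> grid a b"
        using \<open>r \<in> I\<close> \<open>(k, j) \<in> I\<close> order_ideals_subset[OF I] by blast+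
      have "\<not> k < fst r"
      proof
        assume "k < fst r"
        with \<open>gle (k, j) r\<close> \<open>r \<in> grid a b\<close> \<open>(k, j) \<in> grid a b\<close>
        have "(Suc k, j) \<in> grid a b" "gle (Suc k, j) r" by (auto simp: grid_def gle_def)
        with covers show False using order_ideals_down_closed[OF I \<open>r \<in> I\<close>] by blast
      qed
      moreover have "\<not> j < snd r"
      proof
        assume "j < snd r"
        with \<open>gle (k, j) r\<close> \<open>r \<in> grid a b\<close> \<open>(k, j) \<in> grid a b\<close>
        have "(k, Suc j) \<in> grid a b" "gle (k, Suc j) r" by (auto simp: grid_def gle_def)
        with covers show False using order_ideals_down_closed[OF I \<open>r \<in> I\<close>] by blast
      qed
      ultimately show "r = (k, j)" using \<open>gle (k, j) r\<close> by (cases r) (auto simp: gle_def)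
    qed
  qed
  then show ?thesis by (auto simp: Tminus_def)
qed

lemma Tplus_grid:
  assumes I: "I \<in> order_ideals gle (grid a b)"
  shows "Tplus gle (grid a b) (k, j) I =
    (if (k, j) \<in> grid a b - I \<and> (k - 1, j) \<notin> grid a b - I \<and> (k, j - 1) \<notin> grid a b - I
     then 1 else 0)"
proof -
  have "(\<forall>r\<in>grid a b - I. gle r (k, j) \<longrightarrow> r = (k, j)) \<longleftrightarrow>
      (k - 1, j) \<notin> grid a b - I \<and> (k, j - 1) \<notin> grid a b - I"
    if "(k, j) \<in> grid a b - I"
  proof
    assume min: "\<forall>r\<in>grid a b - I. gle r (k, j) \<longrightarrow> r = (k, j)"
    have "gle (k - 1, j) (k, j)" "gle (k, j - 1) (k, j)" by (auto simp: gle_def)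
    moreover have "(k - 1, j) \<noteq> (k, j)" "(k, j - 1) \<noteq> (k, j)" using that by (auto simp: grid_def)
    ultimately show "(k - 1, j) \<notin> grid a b - I \<and> (k, j - 1) \<notin> grid a b - I"
      using min by blast
  next
    assume covers: "(k - 1, j) \<notin> grid a b - I \<and> (k, j - 1) \<notin> grid a b - I"
    show "\<forall>r\<in>grid a b - I. gle r (k, j) \<longrightarrow> r = (k, j)"
    proof (intro ballI impI)
      fix r assume r: "r \<in> grid a b - I" and "gle r (k, j)"
      have "\<not> fst r < k"
      proof
        assume "fst r < k"
        with \<open>gle r (k, j)\<close> r that
        have "(k - 1, j) \<in> grid a b" "gle r (k - 1, j)" by (auto simp: grid_def gle_def)
        with covers r show False using order_ideals_down_closed[OF I] by blast
      qed
      moreover have "\<not> snd r < j"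
      proof
        assume "snd r < j"
        with \<open>gle r (k, j)\<close> r that
        have "(k, j - 1) \<in> grid a b" "gle r (k, j - 1)" by (auto simp: grid_def gle_def)
        with covers r show False using order_ideals_down_closed[OF I] by blast
      qed
      ultimately show "r = (k, j)" using \<open>gle r (k, j)\<close> by (cases r) (auto simp: gle_def)
    qed
  qed
  then show ?thesis by (auto simp: Tplus_def)
qed

text \<open>Row 0 counts as a full row, so that the sum of the T^+ over row k is the corner
  indicator of row k - 1 also for k = 1.\<close>
definition row_len :: "nat \<Rightarrow> (nat \<times> nat) set \<Rightarrow> nat \<Rightarrow> nat" where
  "row_len b I k = (if k = 0 then b else Max (insert 0 {j \<in> {1..b}. (k, j) \<in> I}))"

lemma row_len_0 [simp]: "row_len b I 0 = b"
  by (simp add: row_len_def)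

lemma row_len_le: "row_len b I k \<le> b"
  by (simp add: row_len_def)

lemma mem_ideal_iff_row_len:
  assumes I: "I \<in> order_ideals gle (grid a b)" and "1 \<le> k"
  shows "(k, j) \<in> I \<longleftrightarrow> 1 \<le> j \<and> j \<le> row_len b I k"
proof
  assume "(k, j) \<in> I"
  then have "j \<in> {j \<in> {1..b}. (k, j) \<in> I}" using order_ideals_subset[OF I] by (auto simp: grid_def)
  then show "1 \<le> j \<and> j \<le> row_len b I k" using \<open>1 \<le> k\<close> by (auto simp: row_len_def)
next
  assume j: "1 \<le> j \<and> j \<le> row_len b I k"
  have "Max (insert 0 {j \<in> {1..b}. (k, j) \<in> I}) \<in> insert 0 {j \<in> {1..b}. (k, j) \<in> I}"
    by (rule Max_in) auto
  then have "row_len b I k \<in> insert 0 {j \<in> {1..b}. (k, j) \<in> I}"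
    using \<open>1 \<le> k\<close> by (simp add: row_len_def)
  moreover have "row_len b I k \<noteq> 0" using j by simp
  ultimately have "(k, row_len b I k) \<in> I" by simp
  moreover from this have "(k, j) \<in> grid a b"
    using j order_ideals_subset[OF I] by (auto simp: grid_def)
  ultimately show "(k, j) \<in> I" using order_ideals_down_closed[OF I] j by (auto simp: gle_def)
qed

lemma mem_grid_diff_ideal_iff:
  assumes I: "I \<in> order_ideals gle (grid a b)" and "k \<le> a"
  shows "(k, j) \<in> grid a b - I \<longleftrightarrow> 1 \<le> j \<and> j \<le> b \<and> row_len b I k < j"
proof (cases "k = 0")
  case True
  then show ?thesis by (simp add: grid_def)
next
  case False
  then show ?thesis using mem_ideal_iff_row_len[OF I, of k j] assms by (auto simp: grid_def)
qed

lemma row_len_eq_0: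
  assumes I: "I \<in> order_ideals gle (grid a b)" and "a < k"
  shows "row_len b I k = 0"
proof (rule ccontr)
  assume "row_len b I k \<noteq> 0"
  then have "(k, row_len b I k) \<in> I" using mem_ideal_iff_row_len[OF I] \<open>a < k\<close> by simp
  then show False using order_ideals_subset[OF I] \<open>a < k\<close> by (auto simp: grid_def)
qed

definition row_corner :: "nat \<Rightarrow> (nat \<times> nat) set \<Rightarrow> nat \<Rightarrow> ratfun" where
  "row_corner b I k = (if row_len b I (Suc k) < row_len b I k then 1 else 0)"

lemma sum_singleton_times: "(\<Sum>p\<in>{k} \<times> S. f p) = (\<Sum>j\<in>S. f (k, j))"
proof -
  have "{k} \<times> S = Pair k ` S" by auto
  then show ?thesis by (simp add: sum.reindex inj_on_def)
qed

lemma Tminus_grid_row_len: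
  assumes I: "I \<in> order_ideals gle (grid a b)" and "1 \<le> k"
  shows "Tminus gle (grid a b) (k, j) I = (if j = row_len b I k then row_corner b I k else 0)"
  using assms by (auto simp: Tminus_grid mem_ideal_iff_row_len row_corner_def)

lemma sum_row_Tminus:
  assumes I: "I \<in> order_ideals gle (grid a b)" and "1 \<le> k"
  shows "(\<Sum>p\<in>{k} \<times> {1..b}. Tminus gle (grid a b) p I) = row_corner b I k"
  using row_len_le[of b I k]
  by (simp add: sum_singleton_times Tminus_grid_row_len[OF assms] row_corner_def)

lemma Tplus_grid_row_len:
  assumes I: "I \<in> order_ideals gle (grid a b)" and "1 \<le> k" "k \<le> a" "1 \<le> j" "j \<le> b"
  shows "Tplus gle (grid a b) (k, j) I =
    (if j = Suc (row_len b I k) then row_corner b I (k - 1) else 0)"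
proof -
  have "k - 1 \<le> a" using \<open>k \<le> a\<close> by simp
  then show ?thesis
    unfolding Tplus_grid[OF I] mem_grid_diff_ideal_iff[OF I \<open>k \<le> a\<close>]
      mem_grid_diff_ideal_iff[OF I \<open>k - 1 \<le> a\<close>]
    using assms by (auto simp: row_corner_def)
qed

lemma sum_row_Tplus:
  assumes I: "I \<in> order_ideals gle (grid a b)" and "1 \<le> k" "k \<le> a"
  shows "(\<Sum>p\<in>{k} \<times> {1..b}. Tplus gle (grid a b) p I) = row_corner b I (k - 1)"
  using row_len_le[of b I "k - 1"] assms
  by (auto simp: sum_singleton_times Tplus_grid_row_len[OF assms] row_corner_def)

lemma row_corner_qequiv_step:
  assumes "1 \<le> k" "k \<le> a"
  shows "qequiv gle (grid a b) (\<lambda>I. row_corner b I (k - 1)) (\<lambda>I. qvar * row_corner b I k)"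
proof -
  have "{k} \<times> {1..b} \<subseteq> grid a b" using assms by (auto simp: grid_def)
  with qequiv_toggle_sum[OF finite_grid]
  have "qequiv gle (grid a b) (\<lambda>I. \<Sum>p\<in>{k} \<times> {1..b}. Tplus gle (grid a b) p I)
      (\<lambda>I. qvar * (\<Sum>p\<in>{k} \<times> {1..b}. Tminus gle (grid a b) p I))" .
  then show ?thesis
    by (rule qequiv_diff_cong) (simp only: sum_row_Tplus[OF _ assms] sum_row_Tminus[OF _ assms(1)])
qed

lemma row_corner_qequiv_power:
  assumes "i \<le> a"
  shows "qequiv gle (grid a b) (\<lambda>I. row_corner b I i) (\<lambda>I. qvar ^ (a - i) * row_corner b I a)"
  using assms
proof (induction i rule: inc_induct)
  case base
  show ?case by (simp add: qequiv_refl)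
next
  case (step i)
  have "qequiv gle (grid a b) (\<lambda>I. row_corner b I i) (\<lambda>I. qvar * row_corner b I (Suc i))"
    using row_corner_qequiv_step[of "Suc i" a b] step.hyps by simp
  also have "qequiv gle (grid a b) (\<lambda>I. qvar * row_corner b I (Suc i))
      (\<lambda>I. qvar * (qvar ^ (a - Suc i) * row_corner b I a))"
    using qequiv_scale[OF step.IH] .
  finally show ?case
    using Suc_diff_Suc[OF step.hyps(2), symmetric] by (simp add: mult.assoc)
qed

lemma row_corner_0:
  assumes I: "I \<in> order_ideals gle (grid a b)" and "1 \<le> b"
  shows "row_corner b I 0 = (if (1, b) \<in> I then 0 else 1)"
proof -
  have "(1, b) \<in> I \<longleftrightarrow> b \<le> row_len b I 1"
    using mem_ideal_iff_row_len[OF I, of 1 b] \<open>1 \<le> b\<close> by simp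
  then show ?thesis using row_len_le[of b I 1] by (auto simp: row_corner_def)
qed

lemma row_corner_last:
  assumes I: "I \<in> order_ideals gle (grid a b)" and "1 \<le> a"
  shows "row_corner b I a = (if (a, 1) \<in> I then 1 else 0)"
proof -
  have "(a, 1) \<in> I \<longleftrightarrow> 1 \<le> row_len b I a"
    using mem_ideal_iff_row_len[OF I \<open>1 \<le> a\<close>, of 1] by simp
  then show ?thesis using row_len_eq_0[OF I, of "Suc a"] by (auto simp: row_corner_def)
qed

lemma row_corner_0_transpose:
  assumes I: "I \<in> order_ideals gle (grid a b)" and "1 \<le> a" "1 \<le> b"
  shows "row_corner b I 0 = 1 - row_corner a (prod.swap ` I) b"
proof -
  have "(b, 1) \<in> prod.swap ` I \<longleftrightarrow> (1, b) \<in> I" by force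
  then show ?thesis
    using assms by (simp add: row_corner_0 row_corner_last[OF transpose_ideal[OF I]])
qed

lemma row_corner_last_qequiv:
  assumes "1 \<le> a" "1 \<le> b"
  shows "qequiv gle (grid a b) (\<lambda>I. row_corner b I a)
    (\<lambda>_. (1 - qvar ^ b) / (1 - qvar ^ a * qvar ^ b))"
proof -
  define x where "x I = row_corner b I a" for I
  define y where "y I = row_corner a (prod.swap ` I) b" for I
  have "qequiv gle (grid a b) (\<lambda>I. 1 - y I) (\<lambda>I. qvar ^ a * x I)"
    using row_corner_qequiv_power[OF le0, of a b]
  proof (rule qequiv_diff_cong)
    fix I assume "I \<in> order_ideals gle (grid a b)"
    then show "1 - y I - qvar ^ a * x I = row_corner b I 0 - qvar ^ (a - 0) * row_corner b I a"
      using row_corner_0_transpose assms by (simp add: x_def y_def)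
  qed
  moreover have "qequiv gle (grid a b) (\<lambda>I. 1 - x I) (\<lambda>I. qvar ^ b * y I)"
    using qequiv_transpose[OF row_corner_qequiv_power[OF le0, of b a]]
  proof (rule qequiv_diff_cong)
    fix I assume "I \<in> order_ideals gle (grid a b)"
    then have "row_corner a (prod.swap ` I) 0 = 1 - x I"
      using row_corner_0_transpose[OF transpose_ideal] assms by (simp add: x_def image_image)
    then show "1 - x I - qvar ^ b * y I =
        row_corner a (prod.swap ` I) 0 - qvar ^ (b - 0) * row_corner a (prod.swap ` I) b"
      by (simp add: y_def)
  qed
  moreover have "qvar ^ a * qvar ^ b \<noteq> 1"
    using qvar_power_ne_1[of "a + b"] assms by (simp add: power_add)
  ultimately show ?thesis
    unfolding x_def by (rule qequiv_solve)
qed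

lemma qequiv_row_Tminus_sum:
  assumes "1 \<le> a" "1 \<le> b" "1 \<le> i" "i \<le> a"
  shows "qequiv gle (grid a b) (\<lambda>I. \<Sum>p\<in>{i} \<times> {1..b}. Tminus gle (grid a b) p I)
    (\<lambda>I. qvar ^ (a - i) * qint b / qint (a + b))"
proof -
  have "qequiv gle (grid a b) (\<lambda>I. row_corner b I i) (\<lambda>I. qvar ^ (a - i) * row_corner b I a)"
    using row_corner_qequiv_power assms(4) .
  also have "qequiv gle (grid a b) (\<lambda>I. qvar ^ (a - i) * row_corner b I a)
      (\<lambda>_. qvar ^ (a - i) * ((1 - qvar ^ b) / (1 - qvar ^ a * qvar ^ b)))"
    using qequiv_scale[OF row_corner_last_qequiv[OF assms(1,2)]] .
  finally show ?thesis
  proof (rule qequiv_diff_cong)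
    fix I assume "I \<in> order_ideals gle (grid a b)"
    have "a + b \<noteq> 0" using assms by simp
    have "qvar ^ (a - i) * qint b / qint (a + b) =
        qvar ^ (a - i) * ((1 - qvar ^ b) / (1 - qvar ^ a * qvar ^ b))"
      by (simp only: times_divide_eq_right[symmetric] qint_ratio[OF \<open>a + b \<noteq> 0\<close>] power_add)
    then show "(\<Sum>p\<in>{i} \<times> {1..b}. Tminus gle (grid a b) p I) - qvar ^ (a - i) * qint b / qint (a + b) =
        row_corner b I i - qvar ^ (a - i) * ((1 - qvar ^ b) / (1 - qvar ^ a * qvar ^ b))"
      using sum_row_Tminus[OF \<open>I \<in> order_ideals gle (grid a b)\<close> assms(3)] by simp
  qed
qed

lemma qequiv_column_Tminus_sum:
  assumes "1 \<le> a" "1 \<le> b" "1 \<le> j" "j \<le> b"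
  shows "qequiv gle (grid a b) (\<lambda>I. \<Sum>p\<in>{1..a} \<times> {j}. Tminus gle (grid a b) p I)
    (\<lambda>I. qvar ^ (b - j) * qint a / qint (a + b))"
  using qequiv_transpose[OF qequiv_row_Tminus_sum[OF assms(2,1,3,4)]]
proof (rule qequiv_diff_cong)
  fix I
  have "{j} \<times> {1..a} = prod.swap ` ({1..a} \<times> {j})" by auto
  then show "(\<Sum>p\<in>{1..a} \<times> {j}. Tminus gle (grid a b) p I) - qvar ^ (b - j) * qint a / qint (a + b) =
      (\<Sum>p\<in>{j} \<times> {1..a}. Tminus gle (grid b a) p (prod.swap ` I)) - qvar ^ (b - j) * qint a / qint (b + a)"
    by (simp add: sum.reindex Tminus_transpose add.commute)
qed

theorem theorem5p12:
  fixes a b :: nat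
  assumes "1 \<le> a" and "1 \<le> b"
  shows "(\<forall>i. 1 \<le> i \<and> i \<le> a \<longrightarrow>
           qequiv gle (grid a b)
             (\<lambda>I. \<Sum>p\<in>{i} \<times> {1..b}. Tminus gle (grid a b) p I)
             (\<lambda>I. qvar ^ (a - i) * qint b / qint (a + b)))
       \<and> (\<forall>j. 1 \<le> j \<and> j \<le> b \<longrightarrow>
           qequiv gle (grid a b)
             (\<lambda>I. \<Sum>p\<in>{1..a} \<times> {j}. Tminus gle (grid a b) p I)
             (\<lambda>I. qvar ^ (b - j) * qint a / qint (a + b)))"
  using qequiv_row_Tminus_sum[OF assms] qequiv_column_Tminus_sum[OF assms] by blast

end
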